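(* Let $t\ge 1$, $k\ge t+1$, $v\ge 2$, $\lambda\ge1$. If an SSOA$_\lambda(t,k,v)$ exists, then a simple COA$_\lambda(t,k+t-1,v)$ exists. Explicitly, if $A_1,\dots,A_k$ are the columns of the SSOA, the array $(A_1,A_2,\dots,A_k,A_1,A_2,\dots,A_{t-1})$ is such a simple COA.
   Context: An orthogonal array OA$_\lambda(t,k,v)$ is a $\lambda v^t\times k$ array over a $v$-set $V$ such that every $N\times t$ subarray contains every $t$-tuple exactly $\lambda$ times as a row. It is super-simple, written SSOA$_\lambda(t,k,v)$, if any $t+1$ of its columns contain every $(t+1)$-tuple at most once as a row. A COA$_\lambda(t,k,v)$ is a $\lambda v^t\times k$ array over $V$ in which every set of $t$ consecutive columns contains every $t$-tuple exactly $\lambda$ times. It is simple if for any two distinct sets of $t$ consecutive columns sharing exactly $i$ columns ($0\le i\le t-1$), the subarray on the $2t-i$ columns of their union contains each $(2t-i)$-tuple at most once. *)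

theory Defs
  imports Main
begin

definition is_array :: "'a set \<Rightarrow> nat \<Rightarrow> nat \<Rightarrow> 'a list list \<Rightarrow> bool" where
  "is_array V N k A \<longleftrightarrow> length A = N \<and> (\<forall>r\<in>set A. length r = k \<and> set r \<subseteq> V)"

definition tuple_count :: "'a list list \<Rightarrow> nat list \<Rightarrow> 'a list \<Rightarrow> nat" where
  "tuple_count A cs x = length (filter (\<lambda>r. map (\<lambda>c. r ! c) cs = x) A)"

definition OA :: "nat \<Rightarrow> nat \<Rightarrow> nat \<Rightarrow> 'a set \<Rightarrow> 'a list list \<Rightarrow> bool" where
  "OA lam t k V A \<longleftrightarrow> finite V \<and> is_array V (lam * card V ^ t) k A \<and>
     (\<forall>cs. distinct cs \<and> length cs = t \<and> set cs \<subseteq> {..<k} \<longrightarrow>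
        (\<forall>x. length x = t \<and> set x \<subseteq> V \<longrightarrow> tuple_count A cs x = lam))"

definition SSOA :: "nat \<Rightarrow> nat \<Rightarrow> nat \<Rightarrow> 'a set \<Rightarrow> 'a list list \<Rightarrow> bool" where
  "SSOA lam t k V A \<longleftrightarrow> OA lam t k V A \<and>
     (\<forall>cs. distinct cs \<and> length cs = t + 1 \<and> set cs \<subseteq> {..<k} \<longrightarrow>
        (\<forall>x. tuple_count A cs x \<le> 1))"

definition COA :: "nat \<Rightarrow> nat \<Rightarrow> nat \<Rightarrow> 'a set \<Rightarrow> 'a list list \<Rightarrow> bool" where
  "COA lam t k V A \<longleftrightarrow> finite V \<and> is_array V (lam * card V ^ t) k A \<and>
     (\<forall>i. i + t \<le> k \<longrightarrow>
        (\<forall>x. length x = t \<and> set x \<subseteq> V \<longrightarrow> tuple_count A [i..<i+t] x = lam))"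

text \<open>Simple: for any two distinct sets of t consecutive columns {a..<a+t}, {b..<b+t}
(they automatically share i columns with 0 <= i <= t-1), the subarray on the union of
their columns (in increasing order) contains each tuple at most once.\<close>
definition simple_COA :: "nat \<Rightarrow> nat \<Rightarrow> nat \<Rightarrow> 'a set \<Rightarrow> 'a list list \<Rightarrow> bool" where
  "simple_COA lam t k V A \<longleftrightarrow> COA lam t k V A \<and>
     (\<forall>a b. a < b \<and> b + t \<le> k \<longrightarrow>
        (\<forall>x. tuple_count A (sorted_list_of_set ({a..<a+t} \<union> {b..<b+t})) x \<le> 1))"

end

theory Submission
  imports Defs
begin

text \<open>Column \<open>c\<close> of the extended array is column \<open>c mod k\<close> of the SSOA, and \<open>mod k\<close> is
injective on any \<open>k\<close> consecutive columns. So a window of \<open>t\<close> consecutive columns of the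
extension is a set of \<open>t\<close> distinct columns of the SSOA, which gives the COA property. Two
distinct windows \<open>a < b\<close> together contain the window at \<open>b\<close> plus one column \<open>e < b\<close> that still
lies among the \<open>k\<close> columns ending at \<open>b + t - 1\<close>; these are \<open>t + 1\<close> distinct columns of the
SSOA, on which every tuple occurs at most once, and a fortiori on the whole union.\<close>

lemma inj_on_mod_interval:
  fixes k lo :: nat
  assumes "S \<subseteq> {lo..<lo + k}"
  shows "inj_on (\<lambda>c. c mod k) S"
proof (rule linorder_inj_onI')
  fix c c' assume "c \<in> S" "c' \<in> S" "c < c'"
  moreover have "lo \<le> c" "c' < lo + k"
    using \<open>c \<in> S\<close> \<open>c' \<in> S\<close> assms by auto
  ultimately have "\<not> k dvd c' - c"
    by (simp add: nat_dvd_not_less)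
  then show "c mod k \<noteq> c' mod k"
    using \<open>c < c'\<close> mod_eq_dvd_iff_nat[of c c' k] by (simp add: eq_commute)
qed

lemma distinct_map_mod_interval:
  fixes k lo :: nat
  assumes "distinct cs" "set cs \<subseteq> {lo..<lo + k}"
  shows "distinct (map (\<lambda>c. c mod k) cs)"
  using assms inj_on_mod_interval by (simp add: distinct_map)

lemma nth_append_take_self:
  assumes "length r = k" "m \<le> k" "c < k + m"
  shows "(r @ take m r) ! c = r ! (c mod k)"
  using assms by (cases "c < k") (simp_all add: nth_append le_mod_geq)

lemma tuple_count_append_take_self:
  assumes "\<forall>r\<in>set A. length r = k" "m \<le> k" "set cs \<subseteq> {..<k + m}"
  shows "tuple_count (map (\<lambda>r. r @ take m r) A) cs x = tuple_count A (map (\<lambda>c. c mod k) cs) x"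
proof -
  have row: "map ((!) (r @ take m r)) cs = map ((!) r) (map (\<lambda>c. c mod k) cs)" if "r \<in> set A" for r
    using assms that by (auto simp: nth_append_take_self)
  show ?thesis
    unfolding tuple_count_def length_filter_map comp_def
    by (intro arg_cong[where f = length] filter_cong) (simp_all add: row)
qed

lemma length_filter_mono:
  assumes "\<And>x. x \<in> set xs \<Longrightarrow> P x \<Longrightarrow> Q x"
  shows "length (filter P xs) \<le> length (filter Q xs)"
  using assms by (induction xs) auto

lemma tuple_count_le_1_superset:
  assumes "set ds \<subseteq> set cs" "\<forall>y. tuple_count A ds y \<le> 1"
  shows "tuple_count A cs x \<le> 1"
proof (cases "\<exists>s\<in>set A. map ((!) s) cs = x")
  case False
  then show ?thesis by (simp add: tuple_count_def filter_empty_conv)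
next
  case True
  then obtain s where s: "map ((!) s) cs = x" by blast
  have "map ((!) r) ds = map ((!) s) ds" if "map ((!) r) cs = x" for r
    using that s assms(1) by (metis (no_types, lifting) map_eq_conv subsetD)
  then have "tuple_count A cs x \<le> tuple_count A ds (map ((!) s) ds)"
    unfolding tuple_count_def by (intro length_filter_mono) blast
  also have "\<dots> \<le> 1" using assms(2) by blast
  finally show ?thesis .
qed

lemma column_below_window:
  fixes a b t k :: nat
  assumes "a < b" "b < k" "1 \<le> t" "t < k"
  obtains e where "e \<in> {a..<a + t}" "e < b" "b + t - k \<le> e"
proof
  let ?e = "min (b - 1) (a + t - 1)"
  show "?e \<in> {a..<a + t}" "?e < b" "b + t - k \<le> ?e"
    using assms by (auto simp: min_def)
qed

lemma COA_append_take_self: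
  assumes "OA lam t k V A" "1 \<le> t" "t \<le> k"
  shows "COA lam t (k + t - 1) V (map (\<lambda>r. r @ take (t - 1) r) A)"
proof -
  have arr: "is_array V (lam * card V ^ t) k A"
    and oa: "\<And>cs x. distinct cs \<Longrightarrow> length cs = t \<Longrightarrow> set cs \<subseteq> {..<k} \<Longrightarrow>
        length x = t \<Longrightarrow> set x \<subseteq> V \<Longrightarrow> tuple_count A cs x = lam"
    using assms(1) unfolding OA_def by auto
  then have rows: "\<forall>r\<in>set A. length r = k"
    unfolding is_array_def by blast
  have "is_array V (lam * card V ^ t) (k + t - 1) (map (\<lambda>r. r @ take (t - 1) r) A)"
    using arr assms(2,3) unfolding is_array_def by (auto dest: in_set_takeD)
  moreover have "tuple_count (map (\<lambda>r. r @ take (t - 1) r) A) [i..<i + t] x = lam"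
    if "i + t \<le> k + t - 1" "length x = t" "set x \<subseteq> V" for i x
  proof -
    have "tuple_count (map (\<lambda>r. r @ take (t - 1) r) A) [i..<i + t] x
        = tuple_count A (map (\<lambda>c. c mod k) [i..<i + t]) x"
      using that assms(2,3) by (intro tuple_count_append_take_self[OF rows]) auto
    also have "\<dots> = lam"
    proof (rule oa)
      show "distinct (map (\<lambda>c. c mod k) [i..<i + t])"
        using assms(3) by (intro distinct_map_mod_interval[of _ i]) auto
    qed (use that assms(3) in auto)
    finally show ?thesis .
  qed
  ultimately show ?thesis
    using assms(1) unfolding COA_def OA_def by blast
qed

lemma tuple_count_union_windows_append_take_self:
  assumes "SSOA lam t k V A" "1 \<le> t" "t < k" "a < b" "b + t \<le> k + t - 1"
  shows "tuple_count (map (\<lambda>r. r @ take (t - 1) r) A)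
           (sorted_list_of_set ({a..<a + t} \<union> {b..<b + t})) x \<le> 1"
proof -
  have rows: "\<forall>r\<in>set A. length r = k"
    and ss: "\<And>cs x. distinct cs \<Longrightarrow> length cs = t + 1 \<Longrightarrow> set cs \<subseteq> {..<k} \<Longrightarrow>
        tuple_count A cs x \<le> 1"
    using assms(1) unfolding SSOA_def OA_def is_array_def by auto
  have "b < k"
    using assms(2,5) by simp
  then obtain e where e: "e \<in> {a..<a + t}" "e < b" "b + t - k \<le> e"
    using column_below_window assms(2-4) by blast
  let ?ds = "e # [b..<b + t]"
  have "distinct (map (\<lambda>c. c mod k) ?ds)"
    using e assms(3) by (intro distinct_map_mod_interval[of _ "b + t - k"]) auto
  moreover have "set (map (\<lambda>c. c mod k) ?ds) \<subseteq> {..<k}"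
    using assms(3) by auto
  moreover have "set ?ds \<subseteq> {..<k + (t - 1)}"
    using assms(5) e by auto
  ultimately have "\<forall>y. tuple_count (map (\<lambda>r. r @ take (t - 1) r) A) ?ds y \<le> 1"
    using assms(3) tuple_count_append_take_self[OF rows, of "t - 1" ?ds] ss by simp
  moreover have "set ?ds \<subseteq> set (sorted_list_of_set ({a..<a + t} \<union> {b..<b + t}))"
    using e by auto
  ultimately show ?thesis
    by (blast intro: tuple_count_le_1_superset)
qed

theorem mainTheorem5:
  fixes lam t k :: nat and V :: "'a set" and A :: "'a list list"
  assumes "t \<ge> 1" and "k \<ge> t + 1" and "finite V" and "card V \<ge> 2" and "lam \<ge> 1"
    and "SSOA lam t k V A"
  shows "simple_COA lam t (k + t - 1) V (map (\<lambda>r. r @ take (t - 1) r) A)"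
proof -
  have "OA lam t k V A"
    using assms(6) unfolding SSOA_def by blast
  then have "COA lam t (k + t - 1) V (map (\<lambda>r. r @ take (t - 1) r) A)"
    using assms(1,2) by (intro COA_append_take_self) auto
  moreover have "tuple_count (map (\<lambda>r. r @ take (t - 1) r) A)
      (sorted_list_of_set ({a..<a + t} \<union> {b..<b + t})) x \<le> 1"
    if "a < b" "b + t \<le> k + t - 1" for a b x
    using assms(1,2,6) that by (intro tuple_count_union_windows_append_take_self) auto
  ultimately show ?thesis
    unfolding simple_COA_def by blast
qed

end
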